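(* Let $\Omega$ be a finite set, $m\in\Delta(\Omega)$, $\lambda\in[0,1)$, and consider the irreducible Markov chain on $\Omega$ with transitions $\pi(\omega\mid\omega)=(1-\lambda)m(\omega)+\lambda$ and $\pi(\omega'\mid\omega)=(1-\lambda)m(\omega')$ for $\omega'\ne\omega$ (so $\phi(p)=m+\lambda(p-m)$). Let $r:\Omega\to\mathbb{R}$ and $\delta\in[0,1)$. Let $k\in\{1,\dots,|\Omega^-|\}$ be such that $m\in\bar{\mathcal{O}}(k)$. Then for every initial belief $p_1\in\bar{\mathcal{O}}(k)$, the payoff of the greedy strategy satisfies $\gamma(p_1)=\gamma_*(p_1)$; in particular $\sigma_*$ is optimal at every $p_1\in\bar{\mathcal{O}}(k)$.
   Context: Identify each $\omega\in\Omega$ with a unit vector of $\mathbb{R}^\Omega$ and $\Delta(\Omega)$ with the unit simplex. For $p\in\Delta(\Omega)$ let $\langle p,r\rangle=\sum_\omega p(\omega)r(\omega)$; $I=\{p:\langle p,r\rangle\ge0\}$, $J=\Delta(\Omega)\setminus I$; $\Omega^+=\{r\ge0\}$, $\Omega^-=\{r<0\}$. Order $\Omega^-=\{\omega_1,\dots,\omega_{|\Omega^-|}\}$ so that $0>r(\omega_1)\ge\dots\ge r(\omega_{|\Omega^-|})$, and set $L_k(p)=\sum_{\omega\in\Omega^+}p(\omega)r(\omega)+\sum_{i\le k}p(\omega_i)r(\omega_i)$ for $k\ge1$, and $L_0\equiv1$. Let $\bar{\mathcal{O}}(k)=\{p\in\Delta(\Omega): L_{k-1}(p)\ge0\ge L_k(p)\}$.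 $\phi(q)=qM$ with $M$ the transition matrix. $\mathcal{S}(p)$ is the set of Borel probability measures on $\Delta(\Omega)$ with mean $p$, $\mu_p$ the Dirac mass at $p$. Decision problem from $p_1$: at each stage $n$, at belief $p_n$, the advisor chooses $\mu\in\mathcal{S}(p_n)$ (possibly depending on the past), a posterior $q_n\sim\mu$ is drawn, the stage payoff is $\mathbf{1}_{\{q_n\in I\}}$, and $p_{n+1}=\phi(q_n)$. A strategy's payoff is $\mathbb{E}[(1-\delta)\sum_{n\ge1}\delta^{n-1}\mathbf{1}_{\{q_n\in I\}}]$; $V_\delta(p_1)$ is the maximal payoff; optimal means achieving it. The greedy strategy $\sigma_*$: at $p\in I$ choose $\mu_p$; at $p\in J$ choose a two-point splitting $p=a_Iq_I+a_Jq_J$ maximizing $a_I$ subject to $q_I\in I$, $q_J\in\Delta(\Omega)$, $a_I+a_J=1$, $a_I,a_J\ge0$. $\gamma(p)$ denotes the payoff of $\sigma_*$ from initial belief $p$. Let $\widehat r(p)=\max_{\mu\in\mathcal{S}(p)}\mu(\{q\in I\})$ and $\gamma_*(p_1)=(1-\delta)\sum_{n\ge1}\delta^{n-1}\widehat r(\phi^{(n-1)}(p_1))$. *)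

theory Defs
  imports "HOL-Analysis.Analysis" "HOL-Probability.Probability"
begin

definition bsimplex :: "(real^'w::finite) set" where
  "bsimplex = {p. (\<forall>w. 0 \<le> p $ w) \<and> (\<Sum>w\<in>UNIV. p $ w) = 1}"

definition pairing :: "real^'w::finite \<Rightarrow> ('w \<Rightarrow> real) \<Rightarrow> real" where
  "pairing p r = (\<Sum>w\<in>UNIV. p $ w * r w)"

definition Iset :: "('w::finite \<Rightarrow> real) \<Rightarrow> (real^'w) set" where
  "Iset r = {p \<in> bsimplex. pairing p r \<ge> 0}"

definition Jset :: "('w::finite \<Rightarrow> real) \<Rightarrow> (real^'w) set" where
  "Jset r = bsimplex - Iset r"

definition Opos :: "('w::finite \<Rightarrow> real) \<Rightarrow> 'w set" where
  "Opos r = {w. r w \<ge> 0}"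

definition Oneg :: "('w::finite \<Rightarrow> real) \<Rightarrow> 'w set" where
  "Oneg r = {w. r w < 0}"

definition neg_order :: "('w::finite \<Rightarrow> real) \<Rightarrow> (nat \<Rightarrow> 'w) \<Rightarrow> bool" where
  "neg_order r e \<longleftrightarrow> bij_betw e {1..card (Oneg r)} (Oneg r) \<and>
     (\<forall>i j. 1 \<le> i \<longrightarrow> i \<le> j \<longrightarrow> j \<le> card (Oneg r) \<longrightarrow> r (e j) \<le> r (e i))"

definition Lk :: "('w::finite \<Rightarrow> real) \<Rightarrow> (nat \<Rightarrow> 'w) \<Rightarrow> nat \<Rightarrow> real^'w \<Rightarrow> real" where
  "Lk r e k p = (if k = 0 then 1 else
     (\<Sum>w\<in>Opos r. p $ w * r w) + (\<Sum>i\<in>{1..k}. p $ (e i) * r (e i)))"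

definition Obar :: "('w::finite \<Rightarrow> real) \<Rightarrow> (nat \<Rightarrow> 'w) \<Rightarrow> nat \<Rightarrow> (real^'w) set" where
  "Obar r e k = {p \<in> bsimplex. Lk r e (k - 1) p \<ge> 0 \<and> 0 \<ge> Lk r e k p}"

definition phi :: "('w::finite \<Rightarrow> 'w \<Rightarrow> real) \<Rightarrow> real^'w \<Rightarrow> real^'w" where
  "phi M q = (\<chi> w'. \<Sum>w\<in>UNIV. q $ w * M w w')"

definition irreducible_chain :: "('w \<Rightarrow> 'w \<Rightarrow> real) \<Rightarrow> bool" where
  "irreducible_chain M \<longleftrightarrow> (\<forall>a b. (a, b) \<in> {(x, y). M x y > 0}\<^sup>*)"

definition splittings :: "real^'w::finite \<Rightarrow> (real^'w) measure set" where
  "splittings p = {\<mu>. sets \<mu> = sets borel \<and> prob_space \<mu> \<and> emeasure \<mu> bsimplex = 1 \<and>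
      integrable \<mu> (\<lambda>q. q) \<and> integral\<^sup>L \<mu> (\<lambda>q. q) = p}"

text \<open>Histories are the lists of past posteriors; the current belief is p1 initially
  and phi of the last posterior afterwards.  A strategy maps histories to splittings.\<close>
definition cur_belief :: "('w::finite \<Rightarrow> 'w \<Rightarrow> real) \<Rightarrow> real^'w \<Rightarrow> (real^'w) list \<Rightarrow> real^'w" where
  "cur_belief M p1 h = (if h = [] then p1 else phi M (last h))"

definition valid_strategy ::
  "('w::finite \<Rightarrow> 'w \<Rightarrow> real) \<Rightarrow> real^'w \<Rightarrow> ((real^'w) list \<Rightarrow> (real^'w) measure) \<Rightarrow> bool" where
  "valid_strategy M p1 \<sigma> \<longleftrightarrow> (\<forall>h\<in>lists bsimplex. \<sigma> h \<in> splittings (cur_belief M p1 h))"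

fun trunc_payoff ::
  "('w::finite \<Rightarrow> real) \<Rightarrow> real \<Rightarrow> ((real^'w) list \<Rightarrow> (real^'w) measure) \<Rightarrow>
   (real^'w) list \<Rightarrow> nat \<Rightarrow> ennreal" where
  "trunc_payoff r \<delta> \<sigma> h 0 = 0"
| "trunc_payoff r \<delta> \<sigma> h (Suc N) =
     (\<integral>\<^sup>+ q. ennreal ((1 - \<delta>) * indicator (Iset r) q) + ennreal \<delta> * trunc_payoff r \<delta> \<sigma> (h @ [q]) N \<partial>\<sigma> h)"

text \<open>Payoff E[(1-delta) sum_n delta^(n-1) 1{q_n in I}] (limit of truncations, monotone convergence).\<close>
definition payoff ::
  "('w::finite \<Rightarrow> real) \<Rightarrow> real \<Rightarrow> ((real^'w) list \<Rightarrow> (real^'w) measure) \<Rightarrow> real" where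
  "payoff r \<delta> \<sigma> = enn2real (SUP N. trunc_payoff r \<delta> \<sigma> [] N)"

definition Vdelta :: "('w::finite \<Rightarrow> 'w \<Rightarrow> real) \<Rightarrow> ('w \<Rightarrow> real) \<Rightarrow> real \<Rightarrow> real^'w \<Rightarrow> real" where
  "Vdelta M r \<delta> p1 = (SUP \<sigma>\<in>{\<sigma>. valid_strategy M p1 \<sigma>}. payoff r \<delta> \<sigma>)"

definition two_point :: "real \<Rightarrow> real^'w::finite \<Rightarrow> real \<Rightarrow> real^'w \<Rightarrow> (real^'w) measure \<Rightarrow> bool" where
  "two_point aI qI aJ qJ \<mu> \<longleftrightarrow> sets \<mu> = sets borel \<and>
     (\<forall>A\<in>sets borel. emeasure \<mu> A = ennreal (aI * indicator A qI + aJ * indicator A qJ))"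

definition feasible_split :: "('w::finite \<Rightarrow> real) \<Rightarrow> real^'w \<Rightarrow> real \<Rightarrow> real^'w \<Rightarrow> real \<Rightarrow> real^'w \<Rightarrow> bool" where
  "feasible_split r p aI qI aJ qJ \<longleftrightarrow> 0 \<le> aI \<and> 0 \<le> aJ \<and> aI + aJ = 1 \<and>
     qI \<in> Iset r \<and> qJ \<in> bsimplex \<and> p = aI *\<^sub>R qI + aJ *\<^sub>R qJ"

definition greedy_selection :: "('w::finite \<Rightarrow> real) \<Rightarrow> (real^'w \<Rightarrow> (real^'w) measure) \<Rightarrow> bool" where
  "greedy_selection r g \<longleftrightarrow>
     (\<forall>p\<in>Iset r. g p = return borel p) \<and>
     (\<forall>p\<in>Jset r. \<exists>aI qI aJ qJ. feasible_split r p aI qI aJ qJ \<and>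
         (\<forall>bI sI bJ sJ. feasible_split r p bI sI bJ sJ \<longrightarrow> bI \<le> aI) \<and>
         two_point aI qI aJ qJ (g p))"

definition greedy_strategy ::
  "('w::finite \<Rightarrow> 'w \<Rightarrow> real) \<Rightarrow> real^'w \<Rightarrow> (real^'w \<Rightarrow> (real^'w) measure) \<Rightarrow> (real^'w) list \<Rightarrow> (real^'w) measure" where
  "greedy_strategy M p1 g = (\<lambda>h. g (cur_belief M p1 h))"

definition rhat :: "('w::finite \<Rightarrow> real) \<Rightarrow> real^'w \<Rightarrow> real" where
  "rhat r p = Sup {measure \<mu> (Iset r) | \<mu>. \<mu> \<in> splittings p}"

definition gamma_star :: "('w::finite \<Rightarrow> 'w \<Rightarrow> real) \<Rightarrow> ('w \<Rightarrow> real) \<Rightarrow> real \<Rightarrow> real^'w \<Rightarrow> real" where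
  "gamma_star M r \<delta> p1 = (\<Sum>n. (1 - \<delta>) * \<delta> ^ n * rhat r ((phi M ^^ n) p1))"

definition mix_chain :: "real^'w::finite \<Rightarrow> real \<Rightarrow> 'w \<Rightarrow> 'w \<Rightarrow> real" where
  "mix_chain m lam w w' = (1 - lam) * m $ w' + (if w' = w then lam else 0)"

end

theory Submission
  imports Defs
begin

text \<open>Let \<open>c = r (e k) < 0\<close> and \<open>f q = \<Sum>\<^sub>\<omega> q \<omega> \<cdot> max 0 (1 - r \<omega> / c)\<close>. The functional
  \<open>f\<close> is linear, nonnegative on the simplex and at least \<open>1\<close> on \<open>I\<close>, so every splitting of \<open>p\<close>
  puts mass at most \<open>f p\<close> on \<open>I\<close>, and by backward induction no strategy earns more than
  \<open>\<Sum>\<^sub>n (1 - \<delta>) \<delta>\<^sup>n f (\<phi>\<^sup>n p\<^sub>1)\<close>.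

  Conversely, the threshold region consists of the beliefs \<open>p\<close> for which some \<open>x \<le> p\<close> with
  \<open>\<langle>x, r\<rangle> \<ge> 0\<close> has total mass \<open>f p\<close>. There the greedy split attains \<open>f p\<close>, and its posteriors
  lie again in the region, where \<open>f\<close> agrees with the indicator of \<open>I\<close>. The region is convex
  and contains \<open>O(k)\<close> (take all of \<open>p\<close> on \<open>{r > c}\<close> and a suitable fraction of it on
  \<open>{r = c}\<close>); since \<open>\<phi> p = m + \<lambda> (p - m)\<close> is a convex combination of \<open>m\<close> and \<open>p\<close>, the
  orbit of \<open>p\<^sub>1\<close> stays in it, so the greedy strategy attains the bound, which also equals
  \<open>\<gamma>\<^sub>*\<close>.\<close>

lemma pairing_add [simp]: "pairing (x + y) r = pairing x r + pairing y r"
  by (simp add: pairing_def algebra_simps sum.distrib)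

lemma pairing_scaleR [simp]: "pairing (t *\<^sub>R x) r = t * pairing x r"
  by (simp add: pairing_def algebra_simps sum_distrib_left)

lemma phi_add [simp]: "phi M (x + y) = phi M x + phi M y"
  by (simp add: phi_def vec_eq_iff algebra_simps sum.distrib)

lemma phi_scaleR [simp]: "phi M (t *\<^sub>R x) = t *\<^sub>R phi M x"
  by (simp add: phi_def vec_eq_iff algebra_simps sum_distrib_left)

lemma bsimplex_convex_comb:
  assumes "p \<in> bsimplex" "q \<in> bsimplex" "0 \<le> t" "t \<le> 1"
  shows "t *\<^sub>R p + (1 - t) *\<^sub>R q \<in> bsimplex"
  using assms by (auto simp: bsimplex_def sum.distrib sum_distrib_left[symmetric])

lemma closed_bsimplex: "closed (bsimplex :: (real^'w::finite) set)"
  unfolding bsimplex_def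
  by (intro closed_Collect_conj closed_Collect_all closed_Collect_le closed_Collect_eq continuous_intros)

lemma bsimplex_borel [measurable]: "bsimplex \<in> sets borel"
  using closed_bsimplex by (rule borel_closed)

lemma Iset_borel [measurable]:
  fixes r :: "'w::finite \<Rightarrow> real"
  shows "Iset r \<in> sets borel"
proof -
  have "closed {p::real^'w. 0 \<le> pairing p r}"
    unfolding pairing_def by (intro closed_Collect_le continuous_intros)
  moreover have "Iset r = bsimplex \<inter> {p. 0 \<le> pairing p r}" by (auto simp: Iset_def)
  ultimately have "closed (Iset r)" using closed_bsimplex by (metis closed_Int)
  then show ?thesis by (rule borel_closed)
qed

section \<open>The threshold functional\<close>

text \<open>For \<open>c < 0\<close> the weight dominates \<open>1 - r w / c\<close>, whose mean under a belief in \<open>I\<close> is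
  at least \<open>1\<close>.\<close>
definition threshold_weight :: "('w \<Rightarrow> real) \<Rightarrow> real \<Rightarrow> 'w \<Rightarrow> real" where
  "threshold_weight r c w = (if c < r w then 1 - r w / c else 0)"

definition threshold_value :: "('w::finite \<Rightarrow> real) \<Rightarrow> real \<Rightarrow> real^'w \<Rightarrow> real" where
  "threshold_value r c p = (\<Sum>w\<in>UNIV. p $ w * threshold_weight r c w)"

lemma threshold_value_add [simp]:
  "threshold_value r c (x + y) = threshold_value r c x + threshold_value r c y"
  by (simp add: threshold_value_def algebra_simps sum.distrib)

lemma threshold_value_scaleR [simp]: "threshold_value r c (t *\<^sub>R x) = t * threshold_value r c x"
  by (simp add: threshold_value_def algebra_simps sum_distrib_left)

lemma linear_threshold_value: "linear (threshold_value r c)"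
  by (rule linearI) simp_all

lemma threshold_value_nonneg:
  assumes "c < 0" "p \<in> bsimplex"
  shows "0 \<le> threshold_value r c p"
  using assms unfolding threshold_value_def threshold_weight_def bsimplex_def
  by (auto intro!: sum_nonneg simp: field_simps)

lemma threshold_value_ge_1:
  assumes c: "c < 0" and p: "p \<in> Iset r"
  shows "1 \<le> threshold_value r c p"
proof -
  have pb: "p \<in> bsimplex" and pr: "0 \<le> pairing p r" using p by (auto simp: Iset_def)
  have "1 \<le> 1 - pairing p r / c" using pr c by (simp add: divide_nonneg_neg)
  also have "\<dots> = (\<Sum>w\<in>UNIV. p $ w * (1 - r w / c))"
    using pb by (simp add: bsimplex_def pairing_def algebra_simps sum_subtractf
        sum_divide_distrib[symmetric])
  also have "\<dots> \<le> threshold_value r c p"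
  proof -
    have "1 - r w / c \<le> threshold_weight r c w" for w
      using c by (auto simp: threshold_weight_def field_simps)
    then show ?thesis
      unfolding threshold_value_def using pb by (auto intro!: sum_mono mult_left_mono simp: bsimplex_def)
  qed
  finally show ?thesis .
qed

lemma indicator_Iset_le_threshold_value:
  "c < 0 \<Longrightarrow> p \<in> bsimplex \<Longrightarrow> indicator (Iset r) p \<le> threshold_value r c p"
  using threshold_value_ge_1 threshold_value_nonneg by (auto simp: indicator_def)

text \<open>Normalizing the witness \<open>x\<close> and \<open>p - x\<close> gives a split attaining the threshold value.\<close>
definition threshold_region :: "('w::finite \<Rightarrow> real) \<Rightarrow> real \<Rightarrow> (real^'w) set" where
  "threshold_region r c = {p \<in> bsimplex. \<exists>x::real^'w. (\<forall>w. 0 \<le> x $ w \<and> x $ w \<le> p $ w) \<and>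
      0 \<le> pairing x r \<and> (\<Sum>w\<in>UNIV. x $ w) = threshold_value r c p}"

lemma threshold_region_bsimplex: "p \<in> threshold_region r c \<Longrightarrow> p \<in> bsimplex"
  by (simp add: threshold_region_def)

lemma threshold_region_convex_comb:
  assumes "p \<in> threshold_region r c" "q \<in> threshold_region r c" and t: "0 \<le> t" "t \<le> 1"
  shows "t *\<^sub>R p + (1 - t) *\<^sub>R q \<in> threshold_region r c"
proof -
  obtain x where x: "\<forall>w. 0 \<le> x $ w \<and> x $ w \<le> p $ w" "0 \<le> pairing x r"
    "(\<Sum>w\<in>UNIV. x $ w) = threshold_value r c p"
    using assms(1) by (auto simp: threshold_region_def)
  obtain y where y: "\<forall>w. 0 \<le> y $ w \<and> y $ w \<le> q $ w" "0 \<le> pairing y r"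
    "(\<Sum>w\<in>UNIV. y $ w) = threshold_value r c q"
    using assms(2) by (auto simp: threshold_region_def)
  let ?z = "t *\<^sub>R x + (1 - t) *\<^sub>R y"
  have "\<forall>w. 0 \<le> ?z $ w \<and> ?z $ w \<le> (t *\<^sub>R p + (1 - t) *\<^sub>R q) $ w"
    using x(1) y(1) t by (auto intro!: add_mono mult_left_mono)
  moreover have "0 \<le> pairing ?z r" using x(2) y(2) t by simp
  moreover have "(\<Sum>w\<in>UNIV. ?z $ w) = threshold_value r c (t *\<^sub>R p + (1 - t) *\<^sub>R q)"
    using x(3) y(3) by (simp add: sum.distrib sum_distrib_left[symmetric])
  ultimately show ?thesis
    using assms bsimplex_convex_comb[OF _ _ t] unfolding threshold_region_def by blast
qed

lemma threshold_value_le_1: "p \<in> threshold_region r c \<Longrightarrow> threshold_value r c p \<le> 1"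
proof -
  assume "p \<in> threshold_region r c"
  then obtain x where x: "\<forall>w. x $ w \<le> p $ w" "(\<Sum>w\<in>UNIV. x $ w) = threshold_value r c p"
    and p: "p \<in> bsimplex"
    by (auto simp: threshold_region_def)
  have "(\<Sum>w\<in>UNIV. x $ w) \<le> (\<Sum>w\<in>UNIV. p $ w)" using x(1) by (intro sum_mono) auto
  then show ?thesis using x(2) p by (simp add: bsimplex_def)
qed

lemma threshold_region_of_fraction:
  fixes r :: "'w::finite \<Rightarrow> real"
  assumes p: "p \<in> bsimplex" and c: "c < 0" and s: "0 \<le> s" "s \<le> 1"
    and balance: "(\<Sum>w | c < r w. p $ w * r w) + s * c * (\<Sum>w | r w = c. p $ w) = 0"
  shows "p \<in> threshold_region r c"
proof -
  define S where "S = {w. c < r w}"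
  define T where "T = {w. r w = c}"
  have ST: "S \<inter> T = {}" by (auto simp: S_def T_def)
  define x :: "real^'w" where "x = (\<chi> w. if w \<in> S then p $ w else if w \<in> T then s * p $ w else 0)"
  have "\<forall>w. 0 \<le> x $ w \<and> x $ w \<le> p $ w"
    using p s by (auto simp: x_def bsimplex_def intro: mult_left_le_one_le)
  moreover have "pairing x r = 0"
  proof -
    have "pairing x r = (\<Sum>w\<in>UNIV. (if w \<in> S then p $ w * r w else 0)
        + (if w \<in> T then s * c * p $ w else 0))"
      unfolding pairing_def x_def using ST by (intro sum.cong) (auto simp: T_def)
    then show ?thesis
      using balance by (simp add: sum.distrib sum.If_cases S_def T_def sum_distrib_left)
  qed
  moreover have "(\<Sum>w\<in>UNIV. x $ w) = threshold_value r c p"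
  proof -
    have "(\<Sum>w\<in>UNIV. x $ w) = (\<Sum>w\<in>UNIV. (if w \<in> S then p $ w else 0)
        + (if w \<in> T then s * p $ w else 0))"
      unfolding x_def using ST by (intro sum.cong) auto
    also have "\<dots> = (\<Sum>w\<in>S. p $ w) - (\<Sum>w\<in>S. p $ w * r w) / c"
      using balance c by (simp add: sum.distrib sum.If_cases S_def T_def sum_distrib_left[symmetric]
          field_simps)
    also have "\<dots> = (\<Sum>w\<in>UNIV. if w \<in> S then p $ w * (1 - r w / c) else 0)"
      by (simp add: algebra_simps sum_subtractf sum_divide_distrib sum.If_cases)
    also have "\<dots> = threshold_value r c p"
      unfolding threshold_value_def threshold_weight_def by (intro sum.cong) (auto simp: S_def)
    finally show ?thesis .
  qed
  ultimately show ?thesis using p unfolding threshold_region_def by auto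
qed

lemma threshold_region_intro:
  fixes r :: "'w::finite \<Rightarrow> real"
  assumes p: "p \<in> bsimplex" and c: "c < 0"
    and above: "0 \<le> (\<Sum>w | c < r w. p $ w * r w)"
    and atleast: "(\<Sum>w | c \<le> r w. p $ w * r w) \<le> 0"
  shows "p \<in> threshold_region r c"
proof -
  define PS where "PS = (\<Sum>w | c < r w. p $ w * r w)"
  define PT where "PT = (\<Sum>w | r w = c. p $ w)"
  have PT0: "0 \<le> PT" using p by (simp add: PT_def bsimplex_def sum_nonneg)
  have "{w. c \<le> r w} = {w. c < r w} \<union> {w. r w = c}" by auto
  then have "(\<Sum>w | c \<le> r w. p $ w * r w) = PS + (\<Sum>w | r w = c. p $ w * r w)"
    unfolding PS_def by (simp only:) (rule sum.union_disjoint; auto)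
  also have "(\<Sum>w | r w = c. p $ w * r w) = c * PT"
    by (simp add: PT_def sum_distrib_left mult.commute)
  finally have PSle: "PS \<le> - c * PT" using atleast by simp
  define s where "s = (if PT = 0 then 0 else PS / (- c * PT))"
  have s: "0 \<le> s \<and> s \<le> 1"
  proof (cases "PT = 0")
    case False
    then have pos: "0 < - c * PT" using PT0 c by (simp add: mult_neg_pos)
    have "0 \<le> PS / (- c * PT)" using above pos unfolding PS_def by (rule divide_nonneg_pos)
    moreover have "PS / (- c * PT) \<le> 1" using divide_le_eq_1_pos[OF pos, of PS] PSle by linarith
    ultimately show ?thesis using False by (simp add: s_def)
  qed (simp add: s_def)
  show ?thesis
  proof (rule threshold_region_of_fraction[OF p c])
    show "0 \<le> s" "s \<le> 1" using s by simp_all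
    have "PS + s * c * PT = 0" using PSle PT0 c above by (auto simp: s_def PS_def field_simps)
    then show "(\<Sum>w | c < r w. p $ w * r w) + s * c * (\<Sum>w | r w = c. p $ w) = 0"
      by (simp only: PS_def PT_def)
  qed
qed

lemma sum_le_subset_nonpos:
  fixes f :: "'a \<Rightarrow> 'b::ordered_ab_group_add"
  shows "finite B \<Longrightarrow> A \<subseteq> B \<Longrightarrow> (\<And>b. b \<in> B - A \<Longrightarrow> f b \<le> 0) \<Longrightarrow> sum f B \<le> sum f A"
  using sum_mono2[of B A "\<lambda>x. - f x"] by (simp add: sum_negf)

lemma neg_order_threshold_neg:
  assumes "neg_order r e" "1 \<le> k" "k \<le> card (Oneg r)"
  shows "r (e k) < 0"
  using assms by (auto simp: neg_order_def bij_betw_def Oneg_def)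

lemma Lk_eq_sum:
  assumes e: "neg_order r e" and j: "1 \<le> j" "j \<le> card (Oneg r)"
  shows "Lk r e j p = (\<Sum>w\<in>Opos r \<union> e ` {1..j}. p $ w * r w)"
proof -
  have bij: "bij_betw e {1..card (Oneg r)} (Oneg r)" using e by (simp add: neg_order_def)
  have inj: "inj_on e {1..j}" using bij j by (auto simp: bij_betw_def intro: inj_on_subset)
  have "e ` {1..j} \<subseteq> Oneg r" using bij j by (auto simp: bij_betw_def)
  then have "Opos r \<inter> e ` {1..j} = {}" by (auto simp: Opos_def Oneg_def)
  then have "(\<Sum>w\<in>Opos r \<union> e ` {1..j}. p $ w * r w)
      = (\<Sum>w\<in>Opos r. p $ w * r w) + (\<Sum>w\<in>e ` {1..j}. p $ w * r w)"
    by (simp add: sum.union_disjoint)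
  also have "(\<Sum>w\<in>e ` {1..j}. p $ w * r w) = (\<Sum>i\<in>{1..j}. p $ e i * r (e i))"
    by (subst sum.reindex[OF inj]) simp
  finally show ?thesis using j by (simp add: Lk_def)
qed

text \<open>Dropping the states with \<open>r \<le> r (e k)\<close> from \<open>L\<^sub>k\<^sub>-\<^sub>1\<close> and adding those with
  \<open>r \<ge> r (e k)\<close> to \<open>L\<^sub>k\<close> only removes, resp. adds, negative terms.\<close>
lemma Obar_threshold_sums:
  assumes e: "neg_order r e" and k: "1 \<le> k" "k \<le> card (Oneg r)" and p: "p \<in> Obar r e k"
  shows "0 \<le> (\<Sum>w | r (e k) < r w. p $ w * r w)"
    and "(\<Sum>w | r (e k) \<le> r w. p $ w * r w) \<le> 0"
proof -
  define U where "U j = Opos r \<union> e ` {1..j}" for j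
  have bij: "bij_betw e {1..card (Oneg r)} (Oneg r)"
    and mono: "\<And>i j. 1 \<le> i \<Longrightarrow> i \<le> j \<Longrightarrow> j \<le> card (Oneg r) \<Longrightarrow> r (e j) \<le> r (e i)"
    using e by (simp_all add: neg_order_def)
  have p0: "\<And>w. 0 \<le> p $ w" using p by (simp add: Obar_def bsimplex_def)
  have c: "r (e k) < 0" by (rule neg_order_threshold_neg[OF e k])
  have nonpos: "p $ w * r w \<le> 0" if "r w \<le> 0" for w
    using that p0[of w] by (simp add: mult_nonneg_nonpos)
  have "{w. r (e k) < r w} \<subseteq> U (k - 1)"
  proof
    fix w assume w: "w \<in> {w. r (e k) < r w}"
    show "w \<in> U (k - 1)"
    proof (cases "w \<in> Opos r")
      case False
      then have "w \<in> e ` {1..card (Oneg r)}" using bij by (simp add: bij_betw_def Opos_def Oneg_def)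
      then obtain i where i: "1 \<le> i" "i \<le> card (Oneg r)" "w = e i" by auto
      have "\<not> k \<le> i" using mono[of k i] i k w by auto
      then show ?thesis using i by (auto simp: U_def)
    qed (simp add: U_def)
  qed
  then have "(\<Sum>w\<in>U (k - 1). p $ w * r w) \<le> (\<Sum>w | r (e k) < r w. p $ w * r w)"
    using nonpos c by (intro sum_le_subset_nonpos) (auto simp: U_def)
  moreover have "0 \<le> (\<Sum>w\<in>U (k - 1). p $ w * r w)"
  proof (cases "k = 1")
    case True then show ?thesis using p0 by (auto simp: U_def Opos_def intro!: sum_nonneg)
  next
    case False then show ?thesis using p Lk_eq_sum[OF e, of "k - 1" p] k by (simp add: U_def Obar_def)
  qed
  ultimately show "0 \<le> (\<Sum>w | r (e k) < r w. p $ w * r w)" by linarith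
  have "U k \<subseteq> {w. r (e k) \<le> r w}"
    using mono[of _ k] k c by (auto simp: U_def Opos_def)
  then have "(\<Sum>w | r (e k) \<le> r w. p $ w * r w) \<le> (\<Sum>w\<in>U k. p $ w * r w)"
    using nonpos by (intro sum_le_subset_nonpos) (auto simp: U_def Opos_def)
  also have "\<dots> \<le> 0" using p Lk_eq_sum[OF e k, of p] by (simp add: U_def Obar_def)
  finally show "(\<Sum>w | r (e k) \<le> r w. p $ w * r w) \<le> 0" .
qed

lemma Obar_subset_threshold_region:
  assumes "neg_order r e" "1 \<le> k" "k \<le> card (Oneg r)"
  shows "Obar r e k \<subseteq> threshold_region r (r (e k))"
proof
  fix p assume "p \<in> Obar r e k"
  then show "p \<in> threshold_region r (r (e k))"
    using neg_order_threshold_neg[OF assms] Obar_threshold_sums[OF assms]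
    by (intro threshold_region_intro) (simp_all add: Obar_def)
qed


lemma phi_mix_chain:
  assumes "(\<Sum>w\<in>UNIV. q $ w) = 1"
  shows "phi (mix_chain m lam) q = (1 - lam) *\<^sub>R m + lam *\<^sub>R q"
proof -
  have "(\<Sum>w\<in>UNIV. q $ w * mix_chain m lam w w') = (1 - lam) * m $ w' + lam * q $ w'" for w'
  proof -
    have "(\<Sum>w\<in>UNIV. q $ w * mix_chain m lam w w')
        = (\<Sum>w\<in>UNIV. (1 - lam) * m $ w' * q $ w + (if w = w' then lam * q $ w else 0))"
      by (intro sum.cong) (auto simp: mix_chain_def algebra_simps)
    also have "\<dots> = (1 - lam) * m $ w' + lam * q $ w'"
      using assms by (simp add: sum.distrib sum_distrib_left[symmetric])
    finally show ?thesis .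
  qed
  then show ?thesis by (simp add: phi_def vec_eq_iff)
qed

lemma phi_mix_chain_bsimplex:
  fixes m :: "real^'w::finite"
  assumes "m \<in> bsimplex" "0 \<le> lam" "lam \<le> 1"
  shows "phi (mix_chain m lam) ` bsimplex \<subseteq> bsimplex"
proof clarify
  fix q :: "real^'w" assume q: "q \<in> bsimplex"
  then have "phi (mix_chain m lam) q = (1 - lam) *\<^sub>R m + (1 - (1 - lam)) *\<^sub>R q"
    by (simp add: phi_mix_chain bsimplex_def)
  then show "phi (mix_chain m lam) q \<in> bsimplex"
    using bsimplex_convex_comb[OF assms(1) q, of "1 - lam"] assms by simp
qed

lemma phi_mix_chain_threshold_region:
  assumes "m \<in> threshold_region r c" "0 \<le> lam" "lam \<le> 1"
  shows "phi (mix_chain m lam) ` threshold_region r c \<subseteq> threshold_region r c"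
proof clarify
  fix q assume q: "q \<in> threshold_region r c"
  then have "phi (mix_chain m lam) q = (1 - lam) *\<^sub>R m + (1 - (1 - lam)) *\<^sub>R q"
    by (simp add: phi_mix_chain threshold_region_def bsimplex_def)
  then show "phi (mix_chain m lam) q \<in> threshold_region r c"
    using threshold_region_convex_comb[OF assms(1) q, of "1 - lam"] assms by simp
qed

section \<open>Splittings\<close>

lemma two_point_return: "two_point 1 p 0 p (return borel p)"
  by (simp add: two_point_def ennreal_indicator)

lemma AE_two_point:
  assumes tp: "two_point aI qI aJ qJ \<mu>" and a: "0 \<le> aI" "0 \<le> aJ"
    and PI: "0 < aI \<Longrightarrow> P qI" and PJ: "0 < aJ \<Longrightarrow> P qJ"
  shows "AE q in \<mu>. P q"
proof (rule AE_I')
  define F where "F = {q. q = qI \<and> 0 < aI \<or> q = qJ \<and> 0 < aJ}"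
  have sets: "sets \<mu> = sets borel" using tp by (simp add: two_point_def)
  have "finite F" by (simp add: F_def)
  then have F: "F \<in> sets borel" by (intro borel_closed finite_imp_closed)
  have "emeasure \<mu> (UNIV - F) = ennreal (aI * indicator (UNIV - F) qI + aJ * indicator (UNIV - F) qJ)"
    using tp F by (simp add: two_point_def)
  also have "\<dots> = 0" using a by (cases "0 < aI"; cases "0 < aJ") (auto simp: F_def)
  finally show "UNIV - F \<in> null_sets \<mu>" using F sets by (simp add: null_sets_def)
  show "{q \<in> space \<mu>. \<not> P q} \<subseteq> UNIV - F" using PI PJ by (auto simp: F_def)
qed

lemma two_point_splittings:
  assumes tp: "two_point aI qI aJ qJ \<mu>" and a: "0 \<le> aI" "0 \<le> aJ" "aI + aJ = 1"
    and q: "qI \<in> bsimplex" "qJ \<in> bsimplex"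
  shows "\<mu> \<in> splittings (aI *\<^sub>R qI + aJ *\<^sub>R qJ)"
proof -
  define b where "b x = (if x then qI else qJ)" for x
  define \<nu> where "\<nu> = distr (measure_pmf (bernoulli_pmf aI)) borel b"
  have aI1: "aI \<le> 1" using a by simp
  have b: "b \<in> measurable (measure_pmf (bernoulli_pmf aI)) borel" by simp
  have eq: "\<mu> = \<nu>"
  proof (rule measure_eqI)
    show "sets \<mu> = sets \<nu>" using tp by (simp add: two_point_def \<nu>_def)
    fix A assume "A \<in> sets \<mu>"
    then have A: "A \<in> sets borel" using tp by (simp add: two_point_def)
    have "emeasure \<nu> A = (\<integral>\<^sup>+ x. indicator (b -` A) x \<partial>bernoulli_pmf aI)"
      unfolding \<nu>_def using A by (simp add: emeasure_distr nn_integral_indicator)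
    also have "\<dots> = ennreal (aI * indicator A qI + aJ * indicator A qJ)"
      using a aI1 by (simp add: b_def indicator_def ennreal_mult' mult.commute)
    finally show "emeasure \<mu> A = emeasure \<nu> A" using tp A by (simp add: two_point_def)
  qed
  have "prob_space \<nu>"
    unfolding \<nu>_def by (rule prob_space.prob_space_distr) (simp_all add: measure_pmf.prob_space_axioms)
  moreover have "integrable \<nu> (\<lambda>q. q)"
    unfolding \<nu>_def by (subst integrable_distr_eq[OF b]) (auto intro: integrable_measure_pmf_finite)
  moreover have "integral\<^sup>L \<nu> (\<lambda>q. q) = aI *\<^sub>R qI + aJ *\<^sub>R qJ"
  proof -
    have "integral\<^sup>L \<nu> (\<lambda>q. q) = (\<Sum>x\<in>UNIV. pmf (bernoulli_pmf aI) x *\<^sub>R b x)"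
      unfolding \<nu>_def by (simp add: integral_distr[OF b] integral_measure_pmf[of UNIV])
    then show ?thesis using a aI1 by (simp add: UNIV_bool b_def)
  qed
  moreover have "emeasure \<mu> bsimplex = 1"
    using tp q a by (simp add: two_point_def ennreal_plus[symmetric] del: ennreal_plus)
  moreover have "sets \<mu> = sets borel" using tp by (simp add: two_point_def)
  ultimately show ?thesis unfolding splittings_def by (simp only: eq mem_Collect_eq)
qed

lemma splittings_AE_bsimplex:
  assumes "\<mu> \<in> splittings p"
  shows "AE q in \<mu>. q \<in> bsimplex"
proof -
  interpret prob_space \<mu> using assms by (simp add: splittings_def)
  have "prob bsimplex = 1" using assms by (simp add: splittings_def measure_def)
  then show ?thesis by (rule AE_prob_1)
qed

lemma nn_integral_splittings_linear:
  fixes L :: "real^'w::finite \<Rightarrow> real"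
  assumes \<mu>: "\<mu> \<in> splittings p" and L: "linear L"
    and nonneg: "\<And>q. q \<in> bsimplex \<Longrightarrow> 0 \<le> L q"
  shows "(\<integral>\<^sup>+ q. ennreal (L q) \<partial>\<mu>) = ennreal (L p)"
proof -
  have bl: "bounded_linear L" using L by (simp add: linear_conv_bounded_linear)
  have int: "integrable \<mu> (\<lambda>q. q)" and mean: "integral\<^sup>L \<mu> (\<lambda>q. q) = p"
    using \<mu> by (auto simp: splittings_def)
  have "(\<integral>\<^sup>+ q. ennreal (L q) \<partial>\<mu>) = ennreal (integral\<^sup>L \<mu> L)"
    using splittings_AE_bsimplex[OF \<mu>] nonneg
    by (intro nn_integral_eq_integral integrable_bounded_linear[OF bl int]) (auto elim!: AE_mp)
  also have "integral\<^sup>L \<mu> L = L p" using integral_bounded_linear[OF bl int] mean by simp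
  finally show ?thesis .
qed


section \<open>The greedy splitting\<close>

lemma threshold_value_eq_1:
  "c < 0 \<Longrightarrow> p \<in> threshold_region r c \<Longrightarrow> p \<in> Iset r \<Longrightarrow> threshold_value r c p = 1"
  using threshold_value_le_1 threshold_value_ge_1 by (metis order_antisym)

lemma feasible_split_le_threshold_value:
  assumes c: "c < 0" and f: "feasible_split r p aI qI aJ qJ"
  shows "aI \<le> threshold_value r c p"
proof -
  have "threshold_value r c p = aI * threshold_value r c qI + aJ * threshold_value r c qJ"
    using f by (simp add: feasible_split_def)
  moreover have "aI * 1 \<le> aI * threshold_value r c qI"
    using f threshold_value_ge_1[OF c] by (intro mult_left_mono) (auto simp: feasible_split_def)
  moreover have "0 \<le> aJ * threshold_value r c qJ"
    using f threshold_value_nonneg[OF c, of qJ r] by (simp add: feasible_split_def)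
  ultimately show ?thesis by linarith
qed

lemma threshold_region_feasible_split:
  assumes p: "p \<in> threshold_region r c" and pos: "0 < threshold_value r c p"
  shows "\<exists>qI qJ. feasible_split r p (threshold_value r c p) qI (1 - threshold_value r c p) qJ"
proof -
  define A where "A = threshold_value r c p"
  obtain x where x: "\<forall>w. 0 \<le> x $ w \<and> x $ w \<le> p $ w" "0 \<le> pairing x r" "(\<Sum>w\<in>UNIV. x $ w) = A"
    and pb: "p \<in> bsimplex"
    using p by (auto simp: threshold_region_def A_def)
  have A: "0 < A" "A \<le> 1" using pos threshold_value_le_1[OF p] by (simp_all add: A_def)
  have rest: "(\<Sum>w\<in>UNIV. (p - x) $ w) = 1 - A"
    using x(3) pb by (simp add: sum_subtractf bsimplex_def)
  define qI where "qI = (1 / A) *\<^sub>R x"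
  define qJ where "qJ = (if A = 1 then p else (1 / (1 - A)) *\<^sub>R (p - x))"
  have "qI \<in> Iset r"
    using x A by (auto simp: qI_def Iset_def bsimplex_def sum_divide_distrib[symmetric])
  moreover have "qJ \<in> bsimplex"
    using pb x(1) rest A by (auto simp: qJ_def bsimplex_def sum_divide_distrib[symmetric])
  moreover have "p = A *\<^sub>R qI + (1 - A) *\<^sub>R qJ"
  proof (cases "A = 1")
    case True
    then have "\<forall>w\<in>UNIV. (p - x) $ w = 0"
      using rest x(1) by (subst sum_nonneg_eq_0_iff[symmetric]) auto
    then show ?thesis using True by (simp add: qI_def qJ_def vec_eq_iff)
  qed (use A in \<open>simp add: qI_def qJ_def\<close>)
  ultimately show ?thesis using A unfolding feasible_split_def A_def[symmetric] by auto
qed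

lemma optimal_split_threshold:
  assumes c: "c < 0" and p: "p \<in> threshold_region r c"
    and f: "feasible_split r p aI qI aJ qJ"
    and opt: "\<forall>bI sI bJ sJ. feasible_split r p bI sI bJ sJ \<longrightarrow> bI \<le> aI"
  shows "aI = threshold_value r c p"
    and "0 < aI \<Longrightarrow> qI \<in> threshold_region r c \<and> indicator (Iset r) qI = threshold_value r c qI"
    and "0 < aJ \<Longrightarrow> qJ \<in> threshold_region r c \<and> indicator (Iset r) qJ = threshold_value r c qJ"
proof -
  let ?f = "threshold_value r c"
  have "?f p \<le> aI"
  proof (cases "0 < ?f p")
    case True
    then show ?thesis using threshold_region_feasible_split[OF p] opt by blast
  qed (use f in \<open>simp add: feasible_split_def\<close>)
  then show aI: "aI = ?f p" using feasible_split_le_threshold_value[OF c f] by simp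
  have a: "0 \<le> aI" "0 \<le> aJ" and qI: "qI \<in> Iset r" and qJ: "qJ \<in> bsimplex"
    using f by (auto simp: feasible_split_def)
  have "?f p = aI * ?f qI + aJ * ?f qJ" using f by (simp add: feasible_split_def)
  then have "aI * (?f qI - 1) + aJ * ?f qJ = 0" using aI by (simp add: algebra_simps)
  moreover have "0 \<le> aI * (?f qI - 1)" using a threshold_value_ge_1[OF c qI] by simp
  moreover have "0 \<le> aJ * ?f qJ" using a threshold_value_nonneg[OF c qJ] by simp
  ultimately have zero: "aI * (?f qI - 1) = 0" "aJ * ?f qJ = 0" by linarith+
  show "qI \<in> threshold_region r c \<and> indicator (Iset r) qI = ?f qI" if "0 < aI"
    using that zero(1) qI
    by (auto simp: threshold_region_def Iset_def bsimplex_def intro!: exI[of _ qI])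
  show "qJ \<in> threshold_region r c \<and> indicator (Iset r) qJ = ?f qJ" if "0 < aJ"
    using that zero(2) qJ threshold_value_ge_1[OF c, of qJ r]
    by (auto simp: threshold_region_def bsimplex_def pairing_def indicator_def intro!: exI[of _ 0])
qed

lemma greedy_selection_splittings:
  assumes g: "greedy_selection r g" and p: "p \<in> bsimplex"
  shows "g p \<in> splittings p"
proof (cases "p \<in> Iset r")
  case True
  then show ?thesis
    using g two_point_splittings[OF two_point_return, of p] p by (simp add: greedy_selection_def)
next
  case False
  then obtain aI qI aJ qJ where "feasible_split r p aI qI aJ qJ" "two_point aI qI aJ qJ (g p)"
    using g p unfolding greedy_selection_def Jset_def by blast
  then show ?thesis using two_point_splittings by (auto simp: feasible_split_def Iset_def)
qed

lemma greedy_selection_AE_threshold: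
  assumes c: "c < 0" and g: "greedy_selection r g" and p: "p \<in> threshold_region r c"
  shows "AE q in g p. q \<in> threshold_region r c \<and> indicator (Iset r) q = threshold_value r c q"
proof (cases "p \<in> Iset r")
  case True
  then have "g p = return borel p" using g by (simp add: greedy_selection_def)
  then show ?thesis
    using p True threshold_value_eq_1[OF c p True]
    by (intro AE_two_point[of 1 p 0 p]) (simp_all add: two_point_return)
next
  case False
  then obtain aI qI aJ qJ where f: "feasible_split r p aI qI aJ qJ"
    and opt: "\<forall>bI sI bJ sJ. feasible_split r p bI sI bJ sJ \<longrightarrow> bI \<le> aI"
    and tp: "two_point aI qI aJ qJ (g p)"
    using g threshold_region_bsimplex[OF p] unfolding greedy_selection_def Jset_def by blast
  show ?thesis
    using f optimal_split_threshold(2,3)[OF c p f opt]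
    by (intro AE_two_point[OF tp]) (simp_all add: feasible_split_def)
qed

lemma nn_integral_greedy_indicator:
  assumes c: "c < 0" and g: "greedy_selection r g" and p: "p \<in> threshold_region r c"
  shows "emeasure (g p) (Iset r) = ennreal (threshold_value r c p)"
proof -
  have \<mu>: "g p \<in> splittings p"
    using greedy_selection_splittings[OF g threshold_region_bsimplex[OF p]] .
  then have "emeasure (g p) (Iset r) = (\<integral>\<^sup>+ q. ennreal (indicator (Iset r) q) \<partial>g p)"
    by (simp add: splittings_def nn_integral_indicator ennreal_indicator)
  also have "\<dots> = (\<integral>\<^sup>+ q. ennreal (threshold_value r c q) \<partial>g p)"
    using greedy_selection_AE_threshold[OF c g p] by (intro nn_integral_cong_AE) auto
  also have "\<dots> = ennreal (threshold_value r c p)"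
    using nn_integral_splittings_linear[OF \<mu> linear_threshold_value threshold_value_nonneg[OF c]] .
  finally show ?thesis .
qed

lemma emeasure_splittings_Iset_le:
  assumes c: "c < 0" and \<mu>: "\<mu> \<in> splittings p"
  shows "emeasure \<mu> (Iset r) \<le> ennreal (threshold_value r c p)"
proof -
  have "emeasure \<mu> (Iset r) = (\<integral>\<^sup>+ q. ennreal (indicator (Iset r) q) \<partial>\<mu>)"
    using \<mu> by (simp add: splittings_def nn_integral_indicator ennreal_indicator)
  also have "\<dots> \<le> (\<integral>\<^sup>+ q. ennreal (threshold_value r c q) \<partial>\<mu>)"
    using splittings_AE_bsimplex[OF \<mu>]
    by (intro nn_integral_mono_AE) (auto intro: ennreal_leI indicator_Iset_le_threshold_value[OF c])
  also have "\<dots> = ennreal (threshold_value r c p)"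
    using nn_integral_splittings_linear[OF \<mu> linear_threshold_value threshold_value_nonneg[OF c]] .
  finally show ?thesis .
qed

lemma rhat_eq_threshold_value:
  assumes c: "c < 0" and g: "greedy_selection r g" and p: "p \<in> threshold_region r c"
  shows "rhat r p = threshold_value r c p"
  unfolding rhat_def
proof (rule cSup_eq_maximum)
  have pb: "p \<in> bsimplex" using p by (rule threshold_region_bsimplex)
  show "threshold_value r c p \<in> {measure \<mu> (Iset r) |\<mu>. \<mu> \<in> splittings p}"
    using nn_integral_greedy_indicator[OF c g p] greedy_selection_splittings[OF g pb]
      threshold_value_nonneg[OF c pb]
    by (auto simp: measure_def intro!: exI[of _ "g p"])
  fix y assume "y \<in> {measure \<mu> (Iset r) |\<mu>. \<mu> \<in> splittings p}"
  then obtain \<mu> where \<mu>: "\<mu> \<in> splittings p" and y: "y = measure \<mu> (Iset r)" by blast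
  show "y \<le> threshold_value r c p"
    unfolding y measure_def
    by (rule enn2real_leI[OF threshold_value_nonneg[OF c pb] emeasure_splittings_Iset_le[OF c \<mu>]])
qed


section \<open>The threshold payoff\<close>

lemma funpow_phi_add [simp]: "(phi M ^^ n) (x + y) = (phi M ^^ n) x + (phi M ^^ n) y"
  by (induction n) auto

lemma funpow_phi_scaleR [simp]: "(phi M ^^ n) (t *\<^sub>R x) = t *\<^sub>R (phi M ^^ n) x"
  by (induction n) auto

lemma funpow_phi_mem: "phi M ` S \<subseteq> S \<Longrightarrow> p \<in> S \<Longrightarrow> (phi M ^^ n) p \<in> S"
  by (induction n) auto

definition threshold_payoff ::
  "('w::finite \<Rightarrow> real) \<Rightarrow> real \<Rightarrow> real \<Rightarrow> ('w \<Rightarrow> 'w \<Rightarrow> real) \<Rightarrow> nat \<Rightarrow> real^'w \<Rightarrow> real" where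
  "threshold_payoff r c \<delta> M N p = (\<Sum>n<N. (1 - \<delta>) * \<delta> ^ n * threshold_value r c ((phi M ^^ n) p))"

lemma threshold_payoff_add [simp]:
  "threshold_payoff r c \<delta> M N (x + y) = threshold_payoff r c \<delta> M N x + threshold_payoff r c \<delta> M N y"
  by (simp add: threshold_payoff_def distrib_left sum.distrib)

lemma threshold_payoff_scaleR [simp]:
  "threshold_payoff r c \<delta> M N (t *\<^sub>R x) = t * threshold_payoff r c \<delta> M N x"
  by (simp add: threshold_payoff_def sum_distrib_left mult_ac)

lemma threshold_payoff_Suc:
  "threshold_payoff r c \<delta> M (Suc N) p
    = (1 - \<delta>) * threshold_value r c p + \<delta> * threshold_payoff r c \<delta> M N (phi M p)"
proof -
  have "threshold_payoff r c \<delta> M (Suc N) p = (1 - \<delta>) * threshold_value r c p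
      + (\<Sum>n<N. \<delta> * ((1 - \<delta>) * \<delta> ^ n * threshold_value r c ((phi M ^^ n) (phi M p))))"
    unfolding threshold_payoff_def sum.lessThan_Suc_shift
    by (simp add: funpow_Suc_right mult_ac del: funpow.simps)
  then show ?thesis by (simp add: threshold_payoff_def sum_distrib_left)
qed

lemma threshold_payoff_nonneg:
  assumes "c < 0" "phi M ` bsimplex \<subseteq> bsimplex" "0 \<le> \<delta>" "\<delta> \<le> 1" "p \<in> bsimplex"
  shows "0 \<le> threshold_payoff r c \<delta> M N p"
  unfolding threshold_payoff_def using assms
  by (intro sum_nonneg mult_nonneg_nonneg threshold_value_nonneg funpow_phi_mem) auto

lemma nn_integral_threshold_step:
  assumes c: "c < 0" and phi: "phi M ` bsimplex \<subseteq> bsimplex" and \<delta>: "0 \<le> \<delta>" "\<delta> \<le> 1"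
    and \<mu>: "\<mu> \<in> splittings p"
  shows "(\<integral>\<^sup>+ q. ennreal ((1 - \<delta>) * threshold_value r c q + \<delta> * threshold_payoff r c \<delta> M N (phi M q)) \<partial>\<mu>)
    = ennreal (threshold_payoff r c \<delta> M (Suc N) p)"
proof -
  have "linear (\<lambda>q. (1 - \<delta>) * threshold_value r c q + \<delta> * threshold_payoff r c \<delta> M N (phi M q))"
    by (rule linearI) (simp_all add: algebra_simps)
  moreover have "0 \<le> (1 - \<delta>) * threshold_value r c q + \<delta> * threshold_payoff r c \<delta> M N (phi M q)"
    if "q \<in> bsimplex" for q
    using that threshold_value_nonneg[OF c that] threshold_payoff_nonneg[OF c phi \<delta>] phi \<delta> by auto
  ultimately show ?thesis
    using nn_integral_splittings_linear[OF \<mu>] by (simp add: threshold_payoff_Suc)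
qed

lemma cur_belief_snoc [simp]: "cur_belief M p1 (h @ [q]) = phi M q"
  by (simp add: cur_belief_def)

lemma cur_belief_bsimplex:
  assumes "phi M ` bsimplex \<subseteq> bsimplex" "p1 \<in> bsimplex" "h \<in> lists bsimplex"
  shows "cur_belief M p1 h \<in> bsimplex"
proof (cases "h = []")
  case False
  then have "last h \<in> bsimplex" using assms(3) by (meson in_listsD last_in_set)
  then show ?thesis using False assms(1) by (auto simp: cur_belief_def)
qed (use assms in \<open>simp add: cur_belief_def\<close>)

lemma trunc_payoff_le_threshold_payoff:
  assumes c: "c < 0" and phi: "phi M ` bsimplex \<subseteq> bsimplex" and \<delta>: "0 \<le> \<delta>" "\<delta> \<le> 1"
    and p1: "p1 \<in> bsimplex" and \<sigma>: "valid_strategy M p1 \<sigma>"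
  shows "h \<in> lists bsimplex \<Longrightarrow>
    trunc_payoff r \<delta> \<sigma> h N \<le> ennreal (threshold_payoff r c \<delta> M N (cur_belief M p1 h))"
proof (induction N arbitrary: h)
  case 0
  then show ?case by (simp add: threshold_payoff_def)
next
  case (Suc N)
  let ?V = "threshold_payoff r c \<delta> M N"
  have \<mu>: "\<sigma> h \<in> splittings (cur_belief M p1 h)"
    using \<sigma> Suc.prems by (simp add: valid_strategy_def)
  have "trunc_payoff r \<delta> \<sigma> h (Suc N) \<le>
      (\<integral>\<^sup>+ q. ennreal ((1 - \<delta>) * threshold_value r c q + \<delta> * ?V (phi M q)) \<partial>\<sigma> h)"
    unfolding trunc_payoff.simps
  proof (intro nn_integral_mono_AE, use splittings_AE_bsimplex[OF \<mu>] in eventually_elim)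
    case (elim q)
    have IH: "trunc_payoff r \<delta> \<sigma> (h @ [q]) N \<le> ennreal (?V (phi M q))"
      using Suc.IH[of "h @ [q]"] Suc.prems elim by simp
    have "0 \<le> ?V (phi M q)"
      using elim phi by (intro threshold_payoff_nonneg[OF c phi \<delta>]) auto
    have "ennreal ((1 - \<delta>) * indicator (Iset r) q) + ennreal \<delta> * trunc_payoff r \<delta> \<sigma> (h @ [q]) N
        \<le> ennreal ((1 - \<delta>) * indicator (Iset r) q) + ennreal \<delta> * ennreal (?V (phi M q))"
      by (intro add_left_mono mult_left_mono IH) simp
    also have "\<dots> = ennreal ((1 - \<delta>) * indicator (Iset r) q + \<delta> * ?V (phi M q))"
      using \<delta> \<open>0 \<le> ?V (phi M q)\<close> by (simp add: ennreal_mult ennreal_plus)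
    also have "\<dots> \<le> ennreal ((1 - \<delta>) * threshold_value r c q + \<delta> * ?V (phi M q))"
      using \<delta> indicator_Iset_le_threshold_value[OF c elim]
      by (intro ennreal_leI add_right_mono mult_left_mono) auto
    finally show ?case .
  qed
  also have "\<dots> = ennreal (threshold_payoff r c \<delta> M (Suc N) (cur_belief M p1 h))"
    by (rule nn_integral_threshold_step[OF c phi \<delta> \<mu>])
  finally show ?case .
qed

lemma trunc_payoff_greedy:
  assumes c: "c < 0" and phi: "phi M ` bsimplex \<subseteq> bsimplex"
    and phiG: "phi M ` threshold_region r c \<subseteq> threshold_region r c"
    and \<delta>: "0 \<le> \<delta>" "\<delta> \<le> 1" and g: "greedy_selection r g"
  shows "cur_belief M p1 h \<in> threshold_region r c \<Longrightarrow>
    trunc_payoff r \<delta> (greedy_strategy M p1 g) h N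
      = ennreal (threshold_payoff r c \<delta> M N (cur_belief M p1 h))"
proof (induction N arbitrary: h)
  case 0
  then show ?case by (simp add: threshold_payoff_def)
next
  case (Suc N)
  let ?p = "cur_belief M p1 h" and ?V = "threshold_payoff r c \<delta> M N"
  have \<mu>: "g ?p \<in> splittings ?p"
    using greedy_selection_splittings[OF g threshold_region_bsimplex[OF Suc.prems]] .
  have \<sigma>: "greedy_strategy M p1 g h = g ?p" by (simp add: greedy_strategy_def)
  have "trunc_payoff r \<delta> (greedy_strategy M p1 g) h (Suc N) =
      (\<integral>\<^sup>+ q. ennreal ((1 - \<delta>) * threshold_value r c q + \<delta> * ?V (phi M q)) \<partial>g ?p)"
    unfolding trunc_payoff.simps \<sigma>
  proof (intro nn_integral_cong_AE,
      use greedy_selection_AE_threshold[OF c g Suc.prems] in eventually_elim)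
    case (elim q)
    then have "phi M q \<in> threshold_region r c" using phiG by auto
    then have "trunc_payoff r \<delta> (greedy_strategy M p1 g) (h @ [q]) N = ennreal (?V (phi M q))"
      and "0 \<le> ?V (phi M q)"
      using Suc.IH[of "h @ [q]"] threshold_payoff_nonneg[OF c phi \<delta> threshold_region_bsimplex]
      by auto
    moreover have "0 \<le> threshold_value r c q"
      using elim threshold_value_nonneg[OF c] threshold_region_bsimplex by blast
    ultimately show ?case using elim \<delta> by (simp add: ennreal_mult ennreal_plus)
  qed
  also have "\<dots> = ennreal (threshold_payoff r c \<delta> M (Suc N) ?p)"
    by (rule nn_integral_threshold_step[OF c phi \<delta> \<mu>])
  finally show ?case .
qed


section \<open>Optimality of the greedy strategy\<close>

lemma summable_discounted:
  fixes a :: "nat \<Rightarrow> real"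
  assumes \<delta>: "0 \<le> \<delta>" "\<delta> < 1" and a: "\<And>n. 0 \<le> a n" "\<And>n. a n \<le> 1"
  shows "summable (\<lambda>n. (1 - \<delta>) * \<delta> ^ n * a n)"
proof (rule summable_comparison_test'[of "\<lambda>n. (1 - \<delta>) * \<delta> ^ n"])
  show "summable (\<lambda>n. (1 - \<delta>) * \<delta> ^ n)" using \<delta> by (intro summable_mult summable_geometric) simp
  show "norm ((1 - \<delta>) * \<delta> ^ n * a n) \<le> (1 - \<delta>) * \<delta> ^ n" for n
    using \<delta> a[of n] by (simp add: abs_mult mult_left_le)
qed

lemma payoff_le_of_trunc_payoff_le:
  assumes le: "\<And>N. trunc_payoff r \<delta> \<sigma> [] N \<le> ennreal (\<Sum>n<N. t n)"
    and t: "\<And>n. 0 \<le> t n" "summable t"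
  shows "payoff r \<delta> \<sigma> \<le> (\<Sum>n. t n)"
proof -
  have "(SUP N. trunc_payoff r \<delta> \<sigma> [] N) \<le> ennreal (\<Sum>n. t n)"
    using t by (intro SUP_least order_trans[OF le] ennreal_leI sum_le_suminf) auto
  then show ?thesis unfolding payoff_def using t by (intro enn2real_leI suminf_nonneg)
qed

lemma payoff_eq_of_trunc_payoff_eq:
  assumes eq: "\<And>N. trunc_payoff r \<delta> \<sigma> [] N = ennreal (\<Sum>n<N. t n)"
    and t: "\<And>n. 0 \<le> t n" "summable t"
  shows "payoff r \<delta> \<sigma> = (\<Sum>n. t n)"
proof -
  have "(SUP N. trunc_payoff r \<delta> \<sigma> [] N) = (\<Sum>n. ennreal (t n))"
    using t(1) by (simp add: eq suminf_eq_SUP)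
  then show ?thesis unfolding payoff_def using t by (simp add: suminf_ennreal2 suminf_nonneg)
qed

lemma greedy_optimal_on_invariant_threshold_region:
  assumes c: "c < 0" and \<delta>: "0 \<le> \<delta>" "\<delta> < 1" and g: "greedy_selection r g"
    and phi: "phi M ` bsimplex \<subseteq> bsimplex"
    and phiG: "phi M ` threshold_region r c \<subseteq> threshold_region r c"
    and p1: "p1 \<in> threshold_region r c"
  shows "payoff r \<delta> (greedy_strategy M p1 g) = gamma_star M r \<delta> p1
    \<and> valid_strategy M p1 (greedy_strategy M p1 g)
    \<and> payoff r \<delta> (greedy_strategy M p1 g) = Vdelta M r \<delta> p1"
proof -
  define t where "t n = (1 - \<delta>) * \<delta> ^ n * threshold_value r c ((phi M ^^ n) p1)" for n
  have \<delta>1: "\<delta> \<le> 1" using \<delta> by simp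
  have pb: "p1 \<in> bsimplex" using p1 by (rule threshold_region_bsimplex)
  have orbit: "(phi M ^^ n) p1 \<in> threshold_region r c" for n
    using funpow_phi_mem[OF phiG p1] .
  have orbit_value: "0 \<le> threshold_value r c ((phi M ^^ n) p1)" for n
    using threshold_value_nonneg[OF c threshold_region_bsimplex[OF orbit]] .
  have t: "0 \<le> t n" for n using \<delta> orbit_value by (simp add: t_def)
  have sum_t: "summable t"
    unfolding t_def using \<delta> orbit_value threshold_value_le_1[OF orbit] by (rule summable_discounted)
  have partial: "threshold_payoff r c \<delta> M N p1 = (\<Sum>n<N. t n)" for N
    by (simp add: threshold_payoff_def t_def)
  have valid: "valid_strategy M p1 (greedy_strategy M p1 g)"
    using greedy_selection_splittings[OF g] cur_belief_bsimplex[OF phi pb]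
    by (simp add: valid_strategy_def greedy_strategy_def)
  have greedy: "payoff r \<delta> (greedy_strategy M p1 g) = (\<Sum>n. t n)"
    using trunc_payoff_greedy[OF c phi phiG \<delta>(1) \<delta>1 g, of p1 "[]"] p1 partial
    by (intro payoff_eq_of_trunc_payoff_eq t sum_t) (simp add: cur_belief_def)
  have "payoff r \<delta> \<sigma> \<le> (\<Sum>n. t n)" if "valid_strategy M p1 \<sigma>" for \<sigma>
    using trunc_payoff_le_threshold_payoff[where r = r, OF c phi \<delta>(1) \<delta>1 pb that, of "[]"] partial
    by (intro payoff_le_of_trunc_payoff_le t sum_t) (simp add: cur_belief_def)
  then have "Vdelta M r \<delta> p1 = (\<Sum>n. t n)"
    unfolding Vdelta_def using valid greedy by (intro cSup_eq_maximum) force+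
  moreover have "gamma_star M r \<delta> p1 = (\<Sum>n. t n)"
    unfolding gamma_star_def t_def using rhat_eq_threshold_value[OF c g orbit] by simp
  ultimately show ?thesis using valid greedy by simp
qed

theorem theorem5:
  fixes m :: "real^'w::finite" and lam \<delta> :: real and r :: "'w \<Rightarrow> real"
    and e :: "nat \<Rightarrow> 'w" and k :: nat and p1 :: "real^'w"
    and g :: "real^'w \<Rightarrow> (real^'w) measure"
  assumes "m \<in> bsimplex"
    and "0 \<le> lam" and "lam < 1"
    and "irreducible_chain (mix_chain m lam)"
    and "0 \<le> \<delta>" and "\<delta> < 1"
    and "neg_order r e"
    and "1 \<le> k" and "k \<le> card (Oneg r)"
    and "m \<in> Obar r e k"
    and "p1 \<in> Obar r e k"
    and "greedy_selection r g"
  shows "payoff r \<delta> (greedy_strategy (mix_chain m lam) p1 g) = gamma_star (mix_chain m lam) r \<delta> p1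
       \<and> valid_strategy (mix_chain m lam) p1 (greedy_strategy (mix_chain m lam) p1 g)
       \<and> payoff r \<delta> (greedy_strategy (mix_chain m lam) p1 g) = Vdelta (mix_chain m lam) r \<delta> p1"
proof -
  have region: "Obar r e k \<subseteq> threshold_region r (r (e k))"
    using Obar_subset_threshold_region assms(7-9) .
  show ?thesis
  proof (rule greedy_optimal_on_invariant_threshold_region)
    show "r (e k) < 0" using neg_order_threshold_neg assms(7-9) .
    show "phi (mix_chain m lam) ` bsimplex \<subseteq> bsimplex"
      using phi_mix_chain_bsimplex[of m lam] assms(1-3) by simp
    show "phi (mix_chain m lam) ` threshold_region r (r (e k)) \<subseteq> threshold_region r (r (e k))"
      using phi_mix_chain_threshold_region[of m r "r (e k)" lam] region assms(2,3,10) by auto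
  qed (use region assms(5,6,11,12) in auto)
qed

end
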